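(* Let $S$ be a numerical semigroup, let $\Lambda\subseteq\mathrm{IBetti}(S)$ be nonempty and let $b\in\mathrm{IBetti}(S)\setminus\Lambda$. For $s\in S$ let $q_s$ be the largest integer with $q_sb\le_S s$. Then for every $s\in S$ $$\mathrm B(s;\Lambda\cup\{b\})=\bigcup_{j=0}^{q_s}\Big(\mathrm B(s-jb;\Lambda)+\underbrace{\mathrm I(b)+\cdots+\mathrm I(b)}_{j}\Big),$$ where $+$ denotes Minkowski sum of subsets of $\mathbb N^e$ (the $j=0$ term being $\mathrm B(s;\Lambda)$). In particular, $$|\mathrm B(s;\Lambda\cup\{b\})|\le\sum_{j=0}^{q_s}|\mathrm B(s-jb;\Lambda)|\binom{\mathrm i(b)+j-1}{j}.$$
   Context: A numerical semigroup $S$ is a submonoid of $(\mathbb N,+)$ with finite complement, minimally generated by $\{n_1,\dots,n_e\}$. Write $a\le_S b$ if $b-a\in S$. Let $\varphi:\mathbb N^e\to S$, $\varphi(a)=\sum_ia_in_i$; $\mathrm Z(s)=\varphi^{-1}(s)$. $\nabla_s$ is the graph on $\mathrm Z(s)$ with distinct $x,y$ adjacent iff $x\cdot y\ne0$; $s$ is a Betti element if $\nabla_s$ is disconnected. A factorization $z\in\mathrm Z(s)$ is isolated if $z\cdot x=0$ for all $x\in\mathrm Z(s)\setminus\{z\}$; $\mathrm I(t)$ is the set of isolated factorizations of $t$, $\mathrm i(t)=|\mathrm I(t)|$, and $\mathrm I(\Lambda)=\bigcup_{t\in\Lambda}\mathrm I(t)$. $\mathrm I_s(S)$ is the set of $z\in\mathbb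 N^e$ such that $\varphi(z)$ has exactly one factorization. $\mathrm{IBetti}(S)$ is the set of Betti elements $b$ with $\mathrm I(b)\ne\emptyset$. For $\Lambda\subseteq S$ and $s\in S$, $\mathrm B(s;\Lambda)=\{w+x_1+\cdots+x_l\in\mathrm Z(s): w\in\mathrm I_s(S),\ l\ge0,\ x_1,\dots,x_l\in\mathrm I(\Lambda)\}$. *)

theory Defs
  imports Main "HOL-Library.Function_Algebras"
begin

text \<open>Elements of N^e are modelled as functions nat => nat vanishing from index e on;
  addition of such vectors is pointwise (Function_Algebras).\<close>

definition vecs :: "nat \<Rightarrow> (nat \<Rightarrow> nat) set" where
  "vecs e = {z. \<forall>i\<ge>e. z i = 0}"

definition phi :: "(nat \<Rightarrow> nat) \<Rightarrow> nat \<Rightarrow> (nat \<Rightarrow> nat) \<Rightarrow> nat" where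
  "phi n e z = (\<Sum>i<e. z i * n i)"

definition sgrp :: "(nat \<Rightarrow> nat) \<Rightarrow> nat \<Rightarrow> nat set" where
  "sgrp n e = phi n e ` vecs e"

definition num_sgrp_min_gens :: "(nat \<Rightarrow> nat) \<Rightarrow> nat \<Rightarrow> bool" where
  "num_sgrp_min_gens n e \<longleftrightarrow> e \<ge> 1 \<and> finite (- sgrp n e) \<and>
     (\<forall>i<e. n i \<notin> phi n e ` {z \<in> vecs e. z i = 0})"

definition leS :: "(nat \<Rightarrow> nat) \<Rightarrow> nat \<Rightarrow> nat \<Rightarrow> nat \<Rightarrow> bool" where
  "leS n e a b \<longleftrightarrow> a \<le> b \<and> b - a \<in> sgrp n e"

definition Zf :: "(nat \<Rightarrow> nat) \<Rightarrow> nat \<Rightarrow> nat \<Rightarrow> (nat \<Rightarrow> nat) set" where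
  "Zf n e s = {z \<in> vecs e. phi n e z = s}"

definition dot :: "nat \<Rightarrow> (nat \<Rightarrow> nat) \<Rightarrow> (nat \<Rightarrow> nat) \<Rightarrow> nat" where
  "dot e x y = (\<Sum>i<e. x i * y i)"

definition nabla_edges :: "(nat \<Rightarrow> nat) \<Rightarrow> nat \<Rightarrow> nat \<Rightarrow> ((nat \<Rightarrow> nat) \<times> (nat \<Rightarrow> nat)) set" where
  "nabla_edges n e s = {(x, y). x \<in> Zf n e s \<and> y \<in> Zf n e s \<and> x \<noteq> y \<and> dot e x y \<noteq> 0}"

definition is_betti :: "(nat \<Rightarrow> nat) \<Rightarrow> nat \<Rightarrow> nat \<Rightarrow> bool" where
  "is_betti n e s \<longleftrightarrow> s \<in> sgrp n e \<and>
     (\<exists>x\<in>Zf n e s. \<exists>y\<in>Zf n e s. (x, y) \<notin> (nabla_edges n e s)\<^sup>*)"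

definition Iso :: "(nat \<Rightarrow> nat) \<Rightarrow> nat \<Rightarrow> nat \<Rightarrow> (nat \<Rightarrow> nat) set" where
  "Iso n e t = {z \<in> Zf n e t. \<forall>x \<in> Zf n e t - {z}. dot e z x = 0}"

definition iso_num :: "(nat \<Rightarrow> nat) \<Rightarrow> nat \<Rightarrow> nat \<Rightarrow> nat" where
  "iso_num n e t = card (Iso n e t)"

definition IsoSet :: "(nat \<Rightarrow> nat) \<Rightarrow> nat \<Rightarrow> nat set \<Rightarrow> (nat \<Rightarrow> nat) set" where
  "IsoSet n e \<Lambda> = (\<Union>t\<in>\<Lambda>. Iso n e t)"

definition Is :: "(nat \<Rightarrow> nat) \<Rightarrow> nat \<Rightarrow> (nat \<Rightarrow> nat) set" where
  "Is n e = {z \<in> vecs e. card (Zf n e (phi n e z)) = 1}"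

definition IBetti :: "(nat \<Rightarrow> nat) \<Rightarrow> nat \<Rightarrow> nat set" where
  "IBetti n e = {b. is_betti n e b \<and> Iso n e b \<noteq> {}}"

definition Bset :: "(nat \<Rightarrow> nat) \<Rightarrow> nat \<Rightarrow> nat \<Rightarrow> nat set \<Rightarrow> (nat \<Rightarrow> nat) set" where
  "Bset n e s \<Lambda> = {v \<in> Zf n e s. \<exists>w \<in> Is n e. \<exists>xs. set xs \<subseteq> IsoSet n e \<Lambda> \<and> v = w + sum_list xs}"

definition mink :: "(nat \<Rightarrow> nat) set \<Rightarrow> (nat \<Rightarrow> nat) set \<Rightarrow> (nat \<Rightarrow> nat) set" where
  "mink A B = {a + b | a b. a \<in> A \<and> b \<in> B}"

fun mpow :: "(nat \<Rightarrow> nat) set \<Rightarrow> nat \<Rightarrow> (nat \<Rightarrow> nat) set" where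
  "mpow A 0 = {0}"
| "mpow A (Suc j) = mink A (mpow A j)"

definition qS :: "(nat \<Rightarrow> nat) \<Rightarrow> nat \<Rightarrow> nat \<Rightarrow> nat \<Rightarrow> nat" where
  "qS n e b s = (GREATEST q. leS n e (q * b) s)"

end

theory Submission
  imports Defs "HOL-Library.Multiset"
begin

text \<open>A factorization of $s$ in $\mathrm B(s;\Lambda\cup\{b\})$ is $w$ plus a list of isolated
  factorizations of elements of $\Lambda\cup\{b\}$.  Sorting out the $j$ summands taken from
  $\mathrm I(b)$, each of which factors $b$, leaves a factorization of $s-jb$ in
  $\mathrm B(s-jb;\Lambda)$, and $jb\le_S s$ forces $j\le q_s$; conversely any such sum factors $s$.
  The bound follows by counting: a sum of $j$ elements of $\mathrm I(b)$ depends only on the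
  multiset of summands, and there are $\binom{\mathrm i(b)+j-1}{j}$ multisets of size $j$.\<close>

lemma phi_add: "phi n e (x + y) = phi n e x + phi n e y"
  by (simp add: phi_def sum.distrib algebra_simps)

lemma phi_zero: "phi n e 0 = 0"
  by (simp add: phi_def)

lemma vecs_add: "x \<in> vecs e \<Longrightarrow> y \<in> vecs e \<Longrightarrow> x + y \<in> vecs e"
  by (simp add: vecs_def)

lemma vecs_sum_list: "set xs \<subseteq> vecs e \<Longrightarrow> sum_list xs \<in> vecs e"
  by (induct xs) (auto simp: vecs_def)

lemma Zf_add: "x \<in> Zf n e s \<Longrightarrow> y \<in> Zf n e t \<Longrightarrow> x + y \<in> Zf n e (s + t)"
  by (simp add: Zf_def phi_add vecs_add)

lemma Iso_subset_Zf: "Iso n e t \<subseteq> Zf n e t"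
  by (auto simp: Iso_def)

lemma IsoSet_subset_vecs: "IsoSet n e \<Lambda> \<subseteq> vecs e"
  by (auto simp: IsoSet_def Iso_def Zf_def)

lemma IsoSet_insert: "IsoSet n e (insert b \<Lambda>) = IsoSet n e \<Lambda> \<union> Iso n e b"
  by (auto simp: IsoSet_def)

lemma sum_list_filter_partition:
  "sum_list (filter (\<lambda>x. \<not> P x) xs) + sum_list (filter P xs) = (sum_list xs :: 'a::comm_monoid_add)"
  by (induct xs) (auto simp: add_ac)

lemma mpow_iff: "c \<in> mpow A j \<longleftrightarrow> (\<exists>ys. set ys \<subseteq> A \<and> length ys = j \<and> c = sum_list ys)"
proof (induct j arbitrary: c)
  case (Suc j)
  show ?case
  proof
    assume "c \<in> mpow A (Suc j)"
    then obtain a d where "a \<in> A" "d \<in> mpow A j" "c = a + d" by (auto simp: mink_def)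
    with Suc obtain ys where "set ys \<subseteq> A" "length ys = j" "d = sum_list ys" by blast
    with \<open>a \<in> A\<close> \<open>c = a + d\<close> show "\<exists>ys. set ys \<subseteq> A \<and> length ys = Suc j \<and> c = sum_list ys"
      by (intro exI[of _ "a # ys"]) auto
  next
    assume "\<exists>ys. set ys \<subseteq> A \<and> length ys = Suc j \<and> c = sum_list ys"
    then obtain a ys where "a \<in> A" "set ys \<subseteq> A" "length ys = j" "c = a + sum_list ys"
      by (auto simp: length_Suc_conv)
    with Suc show "c \<in> mpow A (Suc j)" by (auto simp: mink_def)
  qed
qed simp

lemma mpow_Iso_subset_Zf: "mpow (Iso n e t) j \<subseteq> Zf n e (j * t)"
proof (induct j)
  case 0
  show ?case by (simp add: Zf_def vecs_def phi_zero)
next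
  case (Suc j)
  then show ?case using Iso_subset_Zf by (fastforce simp: mink_def intro: Zf_add)
qed

lemma translate_inj: "inj (\<lambda>a::nat \<Rightarrow> nat. a + c)"
  by (auto simp: inj_def fun_eq_iff)

lemma finite_translate_subsetD:
  assumes "(\<lambda>a. a + c) ` A \<subseteq> C" and "finite C"
  shows "finite (A :: (nat \<Rightarrow> nat) set)"
  using assms translate_inj by (meson finite_imageD finite_subset inj_on_subset subset_UNIV)

lemma card_mink_le: "card (mink A B) \<le> card A * card B"
proof (cases "finite A \<and> finite B")
  case True
  have "mink A B = (\<lambda>(a, b). a + b) ` (A \<times> B)" by (auto simp: mink_def)
  then have "card (mink A B) \<le> card (A \<times> B)"
    using True by (simp only: card_image_le finite_cartesian_product)
  then show ?thesis by (simp add: card_cartesian_product)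
next
  case infinite: False
  show ?thesis
  proof (cases "A = {} \<or> B = {}")
    case False
    then obtain a0 b0 where "a0 \<in> A" "b0 \<in> B" by blast
    then have "(\<lambda>a. a + b0) ` A \<subseteq> mink A B" "(\<lambda>b. b + a0) ` B \<subseteq> mink A B"
      by (auto simp: mink_def) (metis add.commute)
    with infinite have "infinite (mink A B)" using finite_translate_subsetD by blast
    then show ?thesis by simp
  qed (auto simp: mink_def)
qed

text \<open>For infinite $I$ the junk value $|I| = 0$ means that for $j>0$ the right-hand side is $0$
  and $\mathrm{mpow}\ I\ j$ has to be shown infinite.\<close>

lemma card_mpow_le: "card (mpow I j) \<le> (card I + j - 1) choose j"
proof (cases "finite I")
  case True
  have "mpow I j \<subseteq> sum_mset ` multisets_of_size I j"
  proof
    fix c assume "c \<in> mpow I j"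
    then obtain ys where "set ys \<subseteq> I" "length ys = j" "c = sum_list ys" by (auto simp: mpow_iff)
    then show "c \<in> sum_mset ` multisets_of_size I j"
      by (intro image_eqI[of _ _ "mset ys"]) (auto simp: multisets_of_size_def sum_mset_sum_list)
  qed
  then have "card (mpow I j) \<le> card (sum_mset ` multisets_of_size I j)"
    by (intro card_mono) (auto intro: True)
  also have "\<dots> \<le> card (multisets_of_size I j)" by (rule card_image_le) (auto intro: True)
  finally show ?thesis using card_multisets_of_size[OF True] by simp
next
  case infinite: False
  show ?thesis
  proof (cases j)
    case (Suc k)
    from infinite obtain x where "x \<in> I" by (metis finite.emptyI ex_in_conv)
    then have "sum_list (replicate k x) \<in> mpow I k"
      unfolding mpow_iff by (intro exI[of _ "replicate k x"]) auto
    then have "(\<lambda>a. a + sum_list (replicate k x)) ` I \<subseteq> mpow I j"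
      using Suc by (auto simp: mink_def)
    with infinite have "infinite (mpow I j)" using finite_translate_subsetD by blast
    then show ?thesis by simp
  qed simp
qed

lemma gens_pos:
  assumes "num_sgrp_min_gens n e" "i < e"
  shows "0 < n i"
proof -
  have "0 \<in> phi n e ` {z \<in> vecs e. z i = 0}"
    using image_eqI[of 0 "phi n e" 0] by (simp add: vecs_def phi_zero)
  moreover have "n i \<notin> phi n e ` {z \<in> vecs e. z i = 0}"
    using assms by (simp add: num_sgrp_min_gens_def)
  ultimately show ?thesis by (cases "n i") auto
qed

lemma Zf_zero:
  assumes "num_sgrp_min_gens n e"
  shows "Zf n e 0 = {0}"
proof -
  have "z = 0" if z: "z \<in> Zf n e 0" for z
  proof -
    have "z i = 0" for i
    proof (cases "i < e")
      case True
      with z have "z i * n i = 0" by (simp add: Zf_def phi_def)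
      then show ?thesis using gens_pos[OF assms True] by simp
    qed (use z in \<open>simp add: Zf_def vecs_def\<close>)
    then show ?thesis by (simp add: fun_eq_iff)
  qed
  then show ?thesis by (auto simp: Zf_def vecs_def phi_zero)
qed

lemma betti_pos:
  assumes "num_sgrp_min_gens n e" "is_betti n e b"
  shows "0 < b"
  using assms Zf_zero[OF assms(1)] by (cases b) (auto simp: is_betti_def)

lemma leS_mult_le:
  assumes "0 < b" "leS n e (j * b) s"
  shows "j \<le> s"
proof -
  have "j \<le> j * b" using assms(1) by simp
  also have "\<dots> \<le> s" using assms(2) by (simp add: leS_def)
  finally show ?thesis .
qed

lemma le_qS:
  assumes "0 < b" "leS n e (j * b) s"
  shows "j \<le> qS n e b s"
  unfolding qS_def using Greatest_le_nat[of "\<lambda>q. leS n e (q * b) s" j s] assms leS_mult_le by blast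

lemma qS_mult_le:
  assumes "0 < b" "s \<in> sgrp n e"
  shows "qS n e b s * b \<le> s"
proof -
  have "leS n e (0 * b) s" using assms(2) by (simp add: leS_def)
  then have "leS n e (qS n e b s * b) s"
    unfolding qS_def using GreatestI_nat[of "\<lambda>q. leS n e (q * b) s" 0 s] assms(1) leS_mult_le
    by blast
  then show ?thesis by (simp add: leS_def)
qed

lemma Bset_union_split:
  assumes "v \<in> Bset n e s (\<Lambda> \<union> {b})"
  obtains j where "leS n e (j * b) s"
    and "v \<in> mink (Bset n e (s - j * b) \<Lambda>) (mpow (Iso n e b) j)"
proof -
  obtain w xs where v: "v \<in> Zf n e s" "w \<in> Is n e" "set xs \<subseteq> IsoSet n e \<Lambda> \<union> Iso n e b"
    "v = w + sum_list xs"
    using assms by (auto simp: Bset_def IsoSet_insert)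
  define P where "P x \<longleftrightarrow> x \<in> Iso n e b" for x
  define xs\<^sub>\<Lambda> where "xs\<^sub>\<Lambda> = filter (\<lambda>x. \<not> P x) xs"
  define xs\<^sub>b where "xs\<^sub>b = filter P xs"
  define a where "a = w + sum_list xs\<^sub>\<Lambda>"
  have v_split: "v = a + sum_list xs\<^sub>b"
    using v(4) sum_list_filter_partition[of P xs] by (simp add: a_def xs\<^sub>\<Lambda>_def xs\<^sub>b_def add.assoc)
  have xs\<^sub>\<Lambda>: "set xs\<^sub>\<Lambda> \<subseteq> IsoSet n e \<Lambda>" using v(3) by (auto simp: xs\<^sub>\<Lambda>_def P_def)
  have c: "sum_list xs\<^sub>b \<in> mpow (Iso n e b) (length xs\<^sub>b)"
    unfolding mpow_iff by (intro exI[of _ xs\<^sub>b]) (auto simp: xs\<^sub>b_def P_def)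
  then have phi_c: "phi n e (sum_list xs\<^sub>b) = length xs\<^sub>b * b"
    using mpow_Iso_subset_Zf by (fastforce simp: Zf_def)
  have a_vecs: "a \<in> vecs e" unfolding a_def
    using v(2) xs\<^sub>\<Lambda> IsoSet_subset_vecs[of n e \<Lambda>] by (intro vecs_add vecs_sum_list) (auto simp: Is_def)
  have phi_a: "phi n e a + length xs\<^sub>b * b = s"
    using v(1) v_split phi_c by (simp add: Zf_def phi_add)
  have "a \<in> Zf n e (s - length xs\<^sub>b * b)" using a_vecs phi_a by (simp add: Zf_def)
  then have "a \<in> Bset n e (s - length xs\<^sub>b * b) \<Lambda>"
    unfolding Bset_def using v(2) xs\<^sub>\<Lambda> a_def by blast
  with c v_split have "v \<in> mink (Bset n e (s - length xs\<^sub>b * b) \<Lambda>) (mpow (Iso n e b) (length xs\<^sub>b))"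
    unfolding mink_def by blast
  moreover have "s - length xs\<^sub>b * b \<in> sgrp n e"
    unfolding sgrp_def using phi_a a_vecs by (intro image_eqI[of _ _ a]) simp_all
  then have "leS n e (length xs\<^sub>b * b) s" using phi_a by (simp add: leS_def)
  ultimately show ?thesis using that by blast
qed

lemma mink_Bset_mpow_subset:
  assumes "j * b \<le> s"
  shows "mink (Bset n e (s - j * b) \<Lambda>) (mpow (Iso n e b) j) \<subseteq> Bset n e s (\<Lambda> \<union> {b})"
proof
  fix v assume "v \<in> mink (Bset n e (s - j * b) \<Lambda>) (mpow (Iso n e b) j)"
  then obtain a c where a: "a \<in> Bset n e (s - j * b) \<Lambda>"
    and c: "c \<in> mpow (Iso n e b) j" and v: "v = a + c" by (auto simp: mink_def)
  obtain ys where ys: "set ys \<subseteq> Iso n e b" "c = sum_list ys"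
    using c by (auto simp: mpow_iff)
  obtain w xs where a': "a \<in> Zf n e (s - j * b)" "w \<in> Is n e" "set xs \<subseteq> IsoSet n e \<Lambda>"
    "a = w + sum_list xs" using a by (auto simp: Bset_def)
  have "v \<in> Zf n e s"
    using Zf_add[OF a'(1) mpow_Iso_subset_Zf[THEN subsetD, OF c]] assms v by simp
  moreover have "v = w + sum_list (xs @ ys)" using v a'(4) ys(2) by (simp add: add.assoc)
  moreover have "set (xs @ ys) \<subseteq> IsoSet n e (\<Lambda> \<union> {b})"
    using a'(3) ys(1) by (auto simp: IsoSet_insert)
  ultimately show "v \<in> Bset n e s (\<Lambda> \<union> {b})" using a'(2) unfolding Bset_def by blast
qed

lemma Bset_union_eq:
  assumes "0 < b" "s \<in> sgrp n e"
  shows "Bset n e s (\<Lambda> \<union> {b}) =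
           (\<Union>j\<in>{0..qS n e b s}. mink (Bset n e (s - j * b) \<Lambda>) (mpow (Iso n e b) j))"
proof
  show "Bset n e s (\<Lambda> \<union> {b}) \<subseteq> (\<Union>j\<in>{0..qS n e b s}. mink (Bset n e (s - j * b) \<Lambda>) (mpow (Iso n e b) j))"
  proof
    fix v assume "v \<in> Bset n e s (\<Lambda> \<union> {b})"
    then obtain j where "leS n e (j * b) s"
      and "v \<in> mink (Bset n e (s - j * b) \<Lambda>) (mpow (Iso n e b) j)"
      by (rule Bset_union_split)
    with le_qS[OF assms(1)] show "v \<in> (\<Union>j\<in>{0..qS n e b s}. mink (Bset n e (s - j * b) \<Lambda>) (mpow (Iso n e b) j))"
      by auto
  qed
  show "(\<Union>j\<in>{0..qS n e b s}. mink (Bset n e (s - j * b) \<Lambda>) (mpow (Iso n e b) j)) \<subseteq> Bset n e s (\<Lambda> \<union> {b})"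
  proof (rule UN_least, rule mink_Bset_mpow_subset)
    fix j assume "j \<in> {0..qS n e b s}"
    then show "j * b \<le> s" using qS_mult_le[OF assms] by (meson atLeastAtMost_iff le_trans mult_le_mono1)
  qed
qed

theorem lemma5p12:
  fixes n :: "nat \<Rightarrow> nat" and e :: nat and \<Lambda> :: "nat set" and b s :: nat
  assumes "num_sgrp_min_gens n e"
    and "\<Lambda> \<subseteq> IBetti n e" and "\<Lambda> \<noteq> {}"
    and "b \<in> IBetti n e - \<Lambda>"
    and "s \<in> sgrp n e"
  shows "Bset n e s (\<Lambda> \<union> {b}) =
           (\<Union>j\<in>{0..qS n e b s}. mink (Bset n e (s - j * b) \<Lambda>) (mpow (Iso n e b) j))
      \<and> card (Bset n e s (\<Lambda> \<union> {b})) \<le>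
           (\<Sum>j=0..qS n e b s. card (Bset n e (s - j * b) \<Lambda>) * ((iso_num n e b + j - 1) choose j))"
proof
  have "0 < b" using betti_pos[OF assms(1)] assms(4) by (simp add: IBetti_def)
  then show decomp: "Bset n e s (\<Lambda> \<union> {b}) =
           (\<Union>j\<in>{0..qS n e b s}. mink (Bset n e (s - j * b) \<Lambda>) (mpow (Iso n e b) j))"
    using assms(5) by (rule Bset_union_eq)
  have "card (Bset n e s (\<Lambda> \<union> {b})) \<le>
      (\<Sum>j=0..qS n e b s. card (mink (Bset n e (s - j * b) \<Lambda>) (mpow (Iso n e b) j)))"
    unfolding decomp by (rule card_UN_le) (rule finite_atLeastAtMost)
  also have "\<dots> \<le> (\<Sum>j=0..qS n e b s. card (Bset n e (s - j * b) \<Lambda>) * card (mpow (Iso n e b) j))"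
    by (intro sum_mono card_mink_le)
  also have "\<dots> \<le> (\<Sum>j=0..qS n e b s. card (Bset n e (s - j * b) \<Lambda>) * ((iso_num n e b + j - 1) choose j))"
    unfolding iso_num_def by (intro sum_mono mult_le_mono2 card_mpow_le)
  finally show "card (Bset n e s (\<Lambda> \<union> {b})) \<le>
      (\<Sum>j=0..qS n e b s. card (Bset n e (s - j * b) \<Lambda>) * ((iso_num n e b + j - 1) choose j))" .
qed

end
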